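(* Let $(V,\mathcal H,\iota,W)$ be a generalized functional theory. The functionals $\mathcal F_{HK}$, $\mathcal F_p$, $\mathcal F_e$ agree on their common domain, and this common domain is the set $\bigcup_{v\in V}\iota^*(\mathbf G_p(v))$ of pure-state $v$-representable densities.
   Context: A generalized functional theory is a tuple $(V,\mathcal H,\iota,W)$ with $V$ a finite-dimensional real vector space, $\mathcal H$ a finite-dimensional complex Hilbert space, $\iota:V\to i\mathfrak u(\mathcal H)$ linear into the Hermitian operators, $W$ Hermitian. Density operators are regarded as elements of $(i\mathfrak u(\mathcal H))^*$ via the trace pairing; $\iota^*$ is the dual map. $\mathcal P$ = pure states, $\mathcal E$ = density operators, $\mathbf G_p(v)$ = pure ground states of $\iota(v)+W$. $\mathcal F_{HK}$ is defined on $\bigcup_v\iota^*(\mathbf G_p(v))$ by $\mathcal F_{HK}(\rho)=\mathrm{Tr}(\Gamma W)$ for any $v$ and any $\Gamma\in\mathbf G_p(v)$ with $\iota^*(\Gamma)=\rho$ (independent of choices). $\mathcal F_p(\rho)=\min\{\mathrm{Tr}(\Gamma W):\Gamma\in\mathcal P,\iota^*(\Gamma)=\rho\}$ on $\iota^*(\mathcal P)$ and $\mathcal F_e(\rho)=\min\{\mathrm{Tr}(\Gamma W):\Gamma\in\mathcal E,\iota^*(\Gamma)=\rho\}$ on $\iota^*(\mathcal E)$. *)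

theory Defs
  imports "HOL-Analysis.Analysis"
begin

text \<open>The Hilbert space is modelled as the finite-dimensional complex space complex^'n
  (with its standard inner product); operators are complex 'n x 'n matrices.\<close>

definition hermitian :: "complex^'n^'n \<Rightarrow> bool" where
  "hermitian A \<longleftrightarrow> (\<forall>i j. A $ i $ j = cnj (A $ j $ i))"

definition tr :: "complex^'n^'n \<Rightarrow> complex" where
  "tr A = (\<Sum>i\<in>UNIV. A $ i $ i)"

definition density_op :: "complex^'n^'n \<Rightarrow> bool" where
  "density_op G \<longleftrightarrow> hermitian G
     \<and> (\<forall>x::complex^'n. 0 \<le> Re (\<Sum>i\<in>UNIV. \<Sum>j\<in>UNIV. cnj (x $ i) * G $ i $ j * x $ j))
     \<and> tr G = 1"

definition proj :: "complex^'n \<Rightarrow> complex^'n^'n" where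
  "proj psi = (\<chi> i j. psi $ i * cnj (psi $ j))"

definition pure_state :: "complex^'n^'n \<Rightarrow> bool" where
  "pure_state G \<longleftrightarrow> (\<exists>psi. norm psi = 1 \<and> G = proj psi)"

text \<open>Trace pairing Tr(G A) (real for Hermitian G, A).\<close>
definition pairing :: "complex^'n^'n \<Rightarrow> complex^'n^'n \<Rightarrow> real" where
  "pairing G A = Re (tr (G ** A))"

definition gft :: "('v::euclidean_space \<Rightarrow> complex^'n^'n) \<Rightarrow> complex^'n^'n \<Rightarrow> bool" where
  "gft iota W \<longleftrightarrow> linear iota \<and> (\<forall>v. hermitian (iota v)) \<and> hermitian W"

definition dual_map :: "('v \<Rightarrow> complex^'n^'n) \<Rightarrow> complex^'n^'n \<Rightarrow> ('v \<Rightarrow> real)" where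
  "dual_map iota G = (\<lambda>v. pairing G (iota v))"

definition Gp :: "('v \<Rightarrow> complex^'n^'n) \<Rightarrow> complex^'n^'n \<Rightarrow> 'v \<Rightarrow> (complex^'n^'n) set" where
  "Gp iota W v = {G. pure_state G \<and>
      (\<forall>G'. pure_state G' \<longrightarrow> pairing G (iota v + W) \<le> pairing G' (iota v + W))}"

definition dom_HK :: "('v \<Rightarrow> complex^'n^'n) \<Rightarrow> complex^'n^'n \<Rightarrow> ('v \<Rightarrow> real) set" where
  "dom_HK iota W = (\<Union>v. dual_map iota ` Gp iota W v)"

definition dom_p :: "('v \<Rightarrow> complex^'n^'n) \<Rightarrow> ('v \<Rightarrow> real) set" where
  "dom_p iota = dual_map iota ` {G. pure_state G}"

definition dom_e :: "('v \<Rightarrow> complex^'n^'n) \<Rightarrow> ('v \<Rightarrow> real) set" where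
  "dom_e iota = dual_map iota ` {G. density_op G}"

text \<open>Functionals.  F_HK picks the value Tr(G W) for some representing ground state
  (the theorem shows this is independent of the choice).  The minima defining
  F_p and F_e are written as infima.\<close>
definition F_HK :: "('v \<Rightarrow> complex^'n^'n) \<Rightarrow> complex^'n^'n \<Rightarrow> ('v \<Rightarrow> real) \<Rightarrow> real" where
  "F_HK iota W rho = (SOME e. \<exists>v G. G \<in> Gp iota W v \<and> dual_map iota G = rho \<and> e = pairing G W)"

definition F_p :: "('v \<Rightarrow> complex^'n^'n) \<Rightarrow> complex^'n^'n \<Rightarrow> ('v \<Rightarrow> real) \<Rightarrow> real" where
  "F_p iota W rho = Inf {pairing G W | G. pure_state G \<and> dual_map iota G = rho}"

definition F_e :: "('v \<Rightarrow> complex^'n^'n) \<Rightarrow> complex^'n^'n \<Rightarrow> ('v \<Rightarrow> real) \<Rightarrow> real" where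
  "F_e iota W rho = Inf {pairing G W | G. density_op G \<and> dual_map iota G = rho}"

end

theory Submission
  imports Defs
begin

text \<open>If \<open>\<Gamma>\<^sub>0\<close> is a pure ground state of \<open>H = \<iota>(v) + W\<close> with energy \<open>m\<close>, then
  \<open>\<langle>x, H x\<rangle> \<ge> m \<parallel>x\<parallel>\<^sup>2\<close> for every vector \<open>x\<close>.  Peeling rank-one projections off a positive
  semidefinite \<open>\<Gamma>\<close> one column at a time (a Cholesky decomposition) then gives
  \<open>Tr(\<Gamma> H) \<ge> m Tr \<Gamma>\<close>, so \<open>\<Gamma>\<^sub>0\<close> also minimises the energy over all density operators.
  Among densities with \<open>\<iota>\<^sup>*(\<Gamma>) = \<iota>\<^sup>*(\<Gamma>\<^sub>0)\<close> the term \<open>Tr(\<Gamma> \<iota>(v))\<close> is constant, hence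
  \<open>\<Gamma>\<^sub>0\<close> minimises \<open>Tr(\<Gamma> W)\<close> both over pure states and over densities: all three functionals
  take the value \<open>Tr(\<Gamma>\<^sub>0 W)\<close> at \<open>\<iota>\<^sup>*(\<Gamma>\<^sub>0)\<close>.\<close>

definition qform :: "complex^'n^'n \<Rightarrow> complex^'n \<Rightarrow> complex" where
  "qform A x = (\<Sum>i\<in>UNIV. \<Sum>j\<in>UNIV. cnj (x$i) * A$i$j * x$j)"

definition sform :: "complex^'n^'n \<Rightarrow> complex^'n \<Rightarrow> complex^'n \<Rightarrow> complex" where
  "sform A x y = (\<Sum>i\<in>UNIV. \<Sum>j\<in>UNIV. cnj (x$i) * A$i$j * y$j)"

definition psd :: "complex^'n^'n \<Rightarrow> bool" where
  "psd A \<longleftrightarrow> (\<forall>x. 0 \<le> Re (qform A x))"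

lemma density_op_iff: "density_op G \<longleftrightarrow> hermitian G \<and> psd G \<and> tr G = 1"
  by (simp add: density_op_def psd_def qform_def)

lemma hermitian_cnj: "hermitian G \<Longrightarrow> cnj (G$i$j) = G$j$i"
  unfolding hermitian_def by (metis complex_cnj_cnj)

lemma hermitian_diag_real:
  assumes "hermitian G"
  shows "G$k$k = of_real (Re (G$k$k))"
proof -
  have "Im (G$k$k) = - Im (G$k$k)"
    using arg_cong[OF hermitian_cnj[OF assms, of k k, symmetric], of Im] by simp
  then show ?thesis
    by (simp add: complex_eq_iff)
qed

lemma hermitian_proj: "hermitian (proj u)"
  unfolding hermitian_def proj_def by simp

lemma hermitian_minus_proj:
  assumes "hermitian G"
  shows "hermitian (G - proj u)"
  unfolding hermitian_def
proof (intro allI)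
  fix i j
  show "(G - proj u)$i$j = cnj ((G - proj u)$j$i)"
    using hermitian_cnj[OF assms, of j i] by (simp add: proj_def)
qed

lemma qform_add: "qform A (x + y) = qform A x + sform A x y + sform A y x + qform A y"
  unfolding qform_def sform_def by (simp add: algebra_simps sum.distrib)

lemma qform_diff_matrix: "qform (A - B) x = qform A x - qform B x"
  unfolding qform_def by (simp add: algebra_simps sum_subtractf)

lemma qform_zero: "qform A 0 = 0"
  by (simp add: qform_def)

lemma qform_scaleR: "qform A (c *\<^sub>R x) = of_real (c\<^sup>2) * qform A x"
proof -
  have "(c *\<^sub>R x)$i = of_real c * x$i" for i
    by (simp only: vector_scaleR_component) (simp add: scaleR_conv_of_real)
  then show ?thesis
    unfolding qform_def by (simp add: sum_distrib_left power2_eq_square ac_simps)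
qed

lemma sform_axis_right: "sform A x (axis k t) = t * (\<Sum>i\<in>UNIV. cnj (x$i) * A$i$k)"
  unfolding sform_def axis_def
  by (simp add: sum_distrib_left ac_simps if_distrib if_distribR cong: if_cong)

lemma sform_axis_left: "sform A (axis k t) x = cnj t * (\<Sum>j\<in>UNIV. A$k$j * x$j)"
  unfolding sform_def axis_def
  by (subst sum.swap) (simp add: sum_distrib_left ac_simps if_distrib if_distribR cong: if_cong)

lemma qform_axis: "qform A (axis k t) = cnj t * t * A$k$k"
proof -
  have "(\<Sum>j\<in>UNIV. cnj (axis k t $ i) * A$i$j * axis k t $ j) = (if i = k then cnj t * t * A$k$k else 0)" for i
    by (cases "i = k") (simp_all add: axis_def if_distrib if_distribR ac_simps cong: if_cong)
  then show ?thesis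
    unfolding qform_def by simp
qed

lemma qform_add_axis:
  assumes "hermitian G"
  shows "qform G (x + axis k t) = qform G x + t * (\<Sum>i\<in>UNIV. cnj (x$i) * G$i$k)
     + cnj t * cnj (\<Sum>i\<in>UNIV. cnj (x$i) * G$i$k) + cnj t * t * G$k$k"
proof -
  have "(\<Sum>j\<in>UNIV. G$k$j * x$j) = cnj (\<Sum>i\<in>UNIV. cnj (x$i) * G$i$k)"
    by (simp add: hermitian_cnj[OF assms] mult.commute)
  then show ?thesis
    unfolding qform_add sform_axis_left sform_axis_right qform_axis by simp
qed

lemma qform_proj:
  "qform (proj u) x = (\<Sum>i\<in>UNIV. cnj (x$i) * u$i) * cnj (\<Sum>i\<in>UNIV. cnj (x$i) * u$i)"
  unfolding qform_def proj_def by (simp add: sum_product ac_simps)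

lemma norm_vec_square: "(norm (x::complex^'n))\<^sup>2 = (\<Sum>i\<in>UNIV. (cmod (x$i))\<^sup>2)"
  by (simp add: norm_vec_def L2_set_def sum_nonneg)

lemma tr_proj: "tr (proj u) = of_real ((norm u)\<^sup>2)"
  unfolding tr_def proj_def norm_vec_square of_real_sum complex_norm_square by simp

lemma tr_add: "tr (A + B) = tr A + tr B"
  by (simp add: tr_def sum.distrib)

lemma pairing_add_left: "pairing (A + B) H = pairing A H + pairing B H"
  unfolding pairing_def tr_def matrix_matrix_mult_def by (simp add: sum.distrib distrib_right)

lemma pairing_add_right: "pairing G (A + B) = pairing G A + pairing G B"
  unfolding pairing_def by (simp add: matrix_add_ldistrib tr_add)

lemma pairing_proj: "pairing (proj u) A = Re (qform A u)"
proof -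
  have "tr (proj u ** A) = qform A u"
    unfolding tr_def proj_def matrix_matrix_mult_def qform_def
    by (simp, subst sum.swap) (simp add: ac_simps)
  then show ?thesis
    by (simp add: pairing_def)
qed

lemma psd_proj: "psd (proj u)"
  unfolding psd_def qform_proj complex_mult_cnj by simp

lemma pure_state_density_op: "pure_state G \<Longrightarrow> density_op G"
  unfolding pure_state_def density_op_iff
  by (auto simp: hermitian_proj psd_proj tr_proj)

lemma psd_diag_nonneg: "psd G \<Longrightarrow> 0 \<le> Re (G$k$k)"
  unfolding psd_def using qform_axis[of G k 1] by (metis complex_cnj_one mult_1)

lemma psd_zero_diag_imp_zero_col:
  fixes G :: "complex^'n^'n"
  assumes herm: "hermitian G" and "psd G" and diag: "G$k$k = 0"
  shows "G$j$k = 0"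
proof (rule ccontr)
  assume ne: "G$j$k \<noteq> 0"
  let ?x = "axis j 1 :: complex^'n"
  have col: "(\<Sum>i\<in>UNIV. cnj (?x$i) * G$i$k) = G$j$k"
    by (simp add: axis_def if_distrib if_distribR cong: if_cong)
  define c where "c = Re (qform G ?x)"
  define s where "s = (c + 1) / (2 * (cmod (G$j$k))\<^sup>2)"
  define t where "t = - (of_real s * cnj (G$j$k))"
  have pos: "0 < (cmod (G$j$k))\<^sup>2"
    using ne by simp
  have t_col: "t * G$j$k = - of_real (s * (cmod (G$j$k))\<^sup>2)"
    and t_col_cnj: "cnj t * cnj (G$j$k) = - of_real (s * (cmod (G$j$k))\<^sup>2)"
    unfolding t_def of_real_mult complex_norm_square by (simp_all add: algebra_simps)
  have "0 \<le> Re (qform G (?x + axis k t))"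
    using \<open>psd G\<close> by (simp add: psd_def)
  also have "Re (qform G (?x + axis k t)) = c - 2 * s * (cmod (G$j$k))\<^sup>2"
    unfolding qform_add_axis[OF herm] col diag t_col t_col_cnj c_def by simp
  also have "\<dots> = -1"
    unfolding s_def using pos by (simp add: field_simps)
  finally show False
    by simp
qed

definition cholesky_column :: "complex^'n^'n \<Rightarrow> 'n \<Rightarrow> complex^'n" where
  "cholesky_column G k = (\<chi> i. G$i$k / of_real (sqrt (Re (G$k$k))))"

lemma cholesky_column_row_zero:
  assumes herm: "hermitian G" and pivot: "0 < Re (G$k$k)"
  shows "(G - proj (cholesky_column G k))$k$j = 0"
proof -
  define g where "g = Re (G$k$k)"
  have "0 < g"
    using pivot by (simp add: g_def)
  have sqrt_sq: "of_real (sqrt g) * of_real (sqrt g) = (of_real g :: complex)"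
    using \<open>0 < g\<close> by (simp flip: of_real_mult)
  have diag: "G$k$k = of_real g"
    using hermitian_diag_real[OF herm] unfolding g_def .
  have "(G - proj (cholesky_column G k))$k$j = G$k$j - G$k$k * G$k$j / (of_real (sqrt g) * of_real (sqrt g))"
    using hermitian_cnj[OF herm, of j k] by (simp add: cholesky_column_def proj_def g_def)
  also have "\<dots> = 0"
    unfolding sqrt_sq diag using \<open>0 < g\<close> by simp
  finally show ?thesis .
qed

lemma psd_minus_proj_cholesky_column:
  fixes G :: "complex^'n^'n"
  assumes herm: "hermitian G" and "psd G" and pivot: "0 < Re (G$k$k)"
  shows "psd (G - proj (cholesky_column G k))"
  unfolding psd_def
proof
  fix x :: "complex^'n"
  define g where "g = Re (G$k$k)"
  define a where "a = (\<Sum>i\<in>UNIV. cnj (x$i) * G$i$k)"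
  have "0 < g"
    using pivot by (simp add: g_def)
  have sqrt_sq: "of_real (sqrt g) * of_real (sqrt g) = (of_real g :: complex)"
    using \<open>0 < g\<close> by (simp flip: of_real_mult)
  have diag: "G$k$k = of_real g"
    using hermitian_diag_real[OF herm] unfolding g_def .
  have "(\<Sum>i\<in>UNIV. cnj (x$i) * cholesky_column G k $ i) = a / of_real (sqrt g)"
    unfolding cholesky_column_def a_def g_def by (simp add: sum_divide_distrib)
  then have "qform (G - proj (cholesky_column G k)) x = qform G x - a * cnj a / of_real g"
    unfolding qform_diff_matrix qform_proj sqrt_sq[symmetric] by simp
  \<comment> \<open>completing the square in the \<open>k\<close>-th coordinate\<close>
  also have "\<dots> = qform G (x + axis k (- cnj a / of_real g))"
    unfolding qform_add_axis[OF herm] diag a_def[symmetric]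
    using \<open>0 < g\<close> by (simp add: field_simps)
  finally show "0 \<le> Re (qform (G - proj (cholesky_column G k)) x)"
    using \<open>psd G\<close> by (simp add: psd_def)
qed

lemma pairing_ge_trace_if_qform_ge:
  assumes "finite S" "hermitian G" "psd G" "\<And>i j. i \<notin> S \<Longrightarrow> G$i$j = 0"
    and H_ge: "\<And>x. m * (norm x)\<^sup>2 \<le> Re (qform H x)"
  shows "m * Re (tr G) \<le> pairing G H"
  using assms(1-4)
proof (induction S arbitrary: G rule: finite_induct)
  case empty
  then have "G = 0"
    by (simp add: vec_eq_iff)
  then show ?case
    by (simp add: pairing_def tr_def)
next
  case (insert k S G)
  consider "Re (G$k$k) = 0" | "0 < Re (G$k$k)"
    using psd_diag_nonneg[OF insert.prems(2), of k] by linarith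
  then show ?case
  proof cases
    case 1
    then have "G$k$k = 0"
      using hermitian_diag_real[OF insert.prems(1), of k] by (metis of_real_0)
    then have "G$k$j = 0" for j
      using psd_zero_diag_imp_zero_col[OF insert.prems(1,2)] hermitian_cnj[OF insert.prems(1), of j k]
      by (metis complex_cnj_zero)
    then have "\<And>i j. i \<notin> S \<Longrightarrow> G$i$j = 0"
      using insert.prems(3) by (metis insert_iff)
    then show ?thesis
      using insert.IH[OF insert.prems(1,2)] by blast
  next
    case 2
    define u where "u = cholesky_column G k"
    define G' where "G' = G - proj u"
    have "G'$i$j = 0" if "i \<notin> S" for i j
    proof (cases "i = k")
      case True
      then show ?thesis
        using cholesky_column_row_zero[OF insert.prems(1) 2] by (simp add: G'_def u_def)
    next
      case False
      then have "G$i$j = 0" "G$i$k = 0"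
        using that insert.prems(3) by auto
      then show ?thesis
        by (simp add: G'_def u_def proj_def cholesky_column_def)
    qed
    then have "m * Re (tr G') \<le> pairing G' H"
      using insert.IH hermitian_minus_proj[OF insert.prems(1)]
        psd_minus_proj_cholesky_column[OF insert.prems(1,2) 2]
      by (simp add: G'_def u_def)
    moreover have "m * Re (tr (proj u)) \<le> pairing (proj u) H"
      using H_ge by (simp add: pairing_proj tr_proj)
    moreover have "G = G' + proj u"
      by (simp add: G'_def)
    ultimately show ?thesis
      by (simp add: tr_add pairing_add_left algebra_simps)
  qed
qed

lemma density_op_pairing_ge:
  assumes "density_op G" "\<And>x. m * (norm x)\<^sup>2 \<le> Re (qform H x)"
  shows "m \<le> pairing G H"
  using pairing_ge_trace_if_qform_ge[of UNIV G m H] assms by (simp add: density_op_iff)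

lemma qform_ge_if_pure_states_ge:
  assumes pure_ge: "\<And>\<psi>. norm \<psi> = 1 \<Longrightarrow> m \<le> pairing (proj \<psi>) H"
  shows "m * (norm x)\<^sup>2 \<le> Re (qform H x)"
proof (cases "x = 0")
  case True
  then show ?thesis
    by (simp add: qform_zero)
next
  case False
  then have "0 < norm x"
    by simp
  have "m \<le> Re (qform H ((1 / norm x) *\<^sub>R x))"
    using pure_ge[of "(1 / norm x) *\<^sub>R x"] False by (simp add: pairing_proj)
  also have "\<dots> = Re (qform H x) / (norm x)\<^sup>2"
    by (simp add: qform_scaleR power_divide)
  finally show ?thesis
    using \<open>0 < norm x\<close> by (simp add: field_simps)
qed

lemma Gp_pure_state: "G \<in> Gp iota W v \<Longrightarrow> pure_state G"
  unfolding Gp_def by blast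

lemma Gp_pairing_le_density_op:
  fixes W :: "complex^'n^'n"
  assumes "G0 \<in> Gp iota W v" "density_op G"
  shows "pairing G0 (iota v + W) \<le> pairing G (iota v + W)"
proof (rule density_op_pairing_ge[OF \<open>density_op G\<close>], rule qform_ge_if_pure_states_ge)
  fix \<psi> :: "complex^'n"
  assume "norm \<psi> = 1"
  then show "pairing G0 (iota v + W) \<le> pairing (proj \<psi>) (iota v + W)"
    using assms(1) unfolding Gp_def pure_state_def by blast
qed

lemma Gp_pairing_W_le:
  assumes "G0 \<in> Gp iota W v" "density_op G" "dual_map iota G = dual_map iota G0"
  shows "pairing G0 W \<le> pairing G W"
proof -
  have "pairing G (iota v) = pairing G0 (iota v)"
    using fun_cong[OF assms(3), of v] by (simp add: dual_map_def)
  then show ?thesis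
    using Gp_pairing_le_density_op[OF assms(1,2)] by (simp add: pairing_add_right)
qed

lemma density_op_Gp: "G \<in> Gp iota W v \<Longrightarrow> density_op G"
  by (rule pure_state_density_op[OF Gp_pure_state])

lemma F_HK_Gp:
  assumes G0: "G0 \<in> Gp iota W v"
  shows "F_HK iota W (dual_map iota G0) = pairing G0 W"
  unfolding F_HK_def
proof (rule some_equality)
  show "\<exists>v G. G \<in> Gp iota W v \<and> dual_map iota G = dual_map iota G0 \<and> pairing G0 W = pairing G W"
    using G0 by blast
next
  fix e
  assume "\<exists>v G. G \<in> Gp iota W v \<and> dual_map iota G = dual_map iota G0 \<and> e = pairing G W"
  then obtain v' G where G: "G \<in> Gp iota W v'" "dual_map iota G = dual_map iota G0" "e = pairing G W"
    by blast
  have "pairing G0 W \<le> pairing G W"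
    using Gp_pairing_W_le[OF G0 density_op_Gp[OF G(1)] G(2)] .
  moreover have "pairing G W \<le> pairing G0 W"
    using Gp_pairing_W_le[OF G(1) density_op_Gp[OF G0] G(2)[symmetric]] .
  ultimately show "e = pairing G0 W"
    using G(3) by simp
qed

lemma F_p_Gp:
  assumes G0: "G0 \<in> Gp iota W v"
  shows "F_p iota W (dual_map iota G0) = pairing G0 W"
  unfolding F_p_def
proof (rule cInf_eq_minimum)
  show "pairing G0 W \<in> {pairing G W |G. pure_state G \<and> dual_map iota G = dual_map iota G0}"
    using Gp_pure_state[OF G0] by blast
next
  fix e
  assume "e \<in> {pairing G W |G. pure_state G \<and> dual_map iota G = dual_map iota G0}"
  then obtain G where "pure_state G" "dual_map iota G = dual_map iota G0" "e = pairing G W"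
    by blast
  then show "pairing G0 W \<le> e"
    using Gp_pairing_W_le[OF G0 pure_state_density_op] by simp
qed

lemma F_e_Gp:
  assumes G0: "G0 \<in> Gp iota W v"
  shows "F_e iota W (dual_map iota G0) = pairing G0 W"
  unfolding F_e_def
proof (rule cInf_eq_minimum)
  show "pairing G0 W \<in> {pairing G W |G. density_op G \<and> dual_map iota G = dual_map iota G0}"
    using density_op_Gp[OF G0] by blast
next
  fix e
  assume "e \<in> {pairing G W |G. density_op G \<and> dual_map iota G = dual_map iota G0}"
  then obtain G where "density_op G" "dual_map iota G = dual_map iota G0" "e = pairing G W"
    by blast
  then show "pairing G0 W \<le> e"
    using Gp_pairing_W_le[OF G0] by simp
qed

lemma dom_HK_subset: "dom_HK iota W \<subseteq> dom_p iota \<inter> dom_e iota"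
proof
  fix rho
  assume "rho \<in> dom_HK iota W"
  then obtain v G where "G \<in> Gp iota W v" "rho = dual_map iota G"
    unfolding dom_HK_def by blast
  then show "rho \<in> dom_p iota \<inter> dom_e iota"
    unfolding dom_p_def dom_e_def by (blast intro: Gp_pure_state density_op_Gp)
qed

theorem proposition2p31:
  fixes iota :: "'v::euclidean_space \<Rightarrow> complex^'n^'n" and W :: "complex^'n^'n"
  assumes "gft iota W"
  shows "dom_HK iota W \<inter> dom_p iota \<inter> dom_e iota = dom_HK iota W
       \<and> (\<forall>rho \<in> dom_HK iota W \<inter> dom_p iota \<inter> dom_e iota.
           F_HK iota W rho = F_p iota W rho \<and> F_p iota W rho = F_e iota W rho)"
proof -
  have "F_HK iota W rho = F_p iota W rho \<and> F_p iota W rho = F_e iota W rho"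
    if rho: "rho \<in> dom_HK iota W" for rho
  proof -
    obtain v G0 where "G0 \<in> Gp iota W v" "rho = dual_map iota G0"
      using rho unfolding dom_HK_def by blast
    then show ?thesis
      by (simp add: F_HK_Gp F_p_Gp F_e_Gp)
  qed
  moreover have "dom_HK iota W \<inter> dom_p iota \<inter> dom_e iota = dom_HK iota W"
    using dom_HK_subset[of iota W] by blast
  ultimately show ?thesis
    by simp
qed

end
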